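(* There exists a constant $c_{m,3}>0$ depending only on $m$ such that the following holds. Let $r>0$ and \[0<\delta<\min\left\{\frac12\left(m-\frac12\right),\ \frac{F_m(r)-F_m(0)}{4}\right\}.\] Then for every $t\in\mathbb R$ with $|t|>r$ and every $n\ge1$, \[P\big(L_n(t)\le F_m(0)+\delta\big)\le\exp\left(-\frac{\delta}{c_{m,3}}\big(F_m(t)-F_m(0)-2\delta\big)n\right).\]
   Context: Fix $m>1/2$. Let $c_m:=\left(\int_{\mathbb R}(1+x^2)^{-m}dx\right)^{-1}$ and $\nu_m(dx):=c_m(1+x^2)^{-m}dx$. Let $(X_n)_{n\ge1}$ be i.i.d. random variables on $(\Omega,\mathcal F,P)$ with law $\nu_m$. Let $L_n(t):=\frac1n\sum_{i=1}^n\log(1+(X_i-t)^2)$ and $F_m(t):=\int_{\mathbb R}\log(1+(x-t)^2)\,\nu_m(dx)$ for $t\in\mathbb R$. *)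

theory Defs
  imports "HOL-Probability.Probability"
begin

definition cm :: "real \<Rightarrow> real" where
  "cm m = 1 / (LINT x|lborel. (1 + x\<^sup>2) powr (-m))"

definition num :: "real \<Rightarrow> real measure" where
  "num m = density lborel (\<lambda>x. ennreal (cm m * (1 + x\<^sup>2) powr (-m)))"

definition Fm :: "real \<Rightarrow> real \<Rightarrow> real" where
  "Fm m t = (LINT x|num m. ln (1 + (x - t)\<^sup>2))"

definition Ln :: "(nat \<Rightarrow> 'a \<Rightarrow> real) \<Rightarrow> nat \<Rightarrow> real \<Rightarrow> 'a \<Rightarrow> real" where
  "Ln X n t \<omega> = (1 / real n) * (\<Sum>i\<in>{1..n}. ln (1 + (X i \<omega> - t)\<^sup>2))"

end

theory Submission
  imports Defs
begin

text \<open>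
  By Chernoff's bound it suffices to show
  exp (l (F_m(0) + delta)) E[(1 + (X - t)^2)^(-l)] <= exp (-l (F_m(t) - F_m(0) - 2 delta) / 2)
  for l = s delta, with s depending only on m. The tools are the inequality
  1 + (a + b)^2 <= 2 (1 + a^2) (1 + b^2) and the finiteness of E[(1 + X^2)^e] for e < m - 1/2.
  If F_m(t) - F_m(0) is large, so is ln (1 + t^2), and bounding (1 + (X - t)^2)^(-l) by
  2^l (1 + t^2)^(-l) (1 + X^2)^l, where E[(1 + X^2)^l] is controlled by concavity of y^(l/e),
  gives the claim. Otherwise ln (1 + t^2) is bounded in terms of m alone, hence so is the second
  moment of ln (1 + (X - t)^2), and exp (-u) <= 1 - u + u^2/2 gives the Laplace transform
  bound exp (-l F_m(t) + O(l^2)).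
\<close>

lemma one_plus_square_add_le:
  fixes a b :: real
  shows "1 + (a + b)\<^sup>2 \<le> 2 * (1 + a\<^sup>2) * (1 + b\<^sup>2)"
proof -
  have "0 \<le> (a - b)\<^sup>2 + 2 * (a * b)\<^sup>2" by simp
  then show ?thesis by (simp add: power2_eq_square algebra_simps)
qed

lemma ln_one_plus_square_add_le:
  fixes a b :: real
  shows "ln (1 + (a + b)\<^sup>2) \<le> ln 2 + ln (1 + a\<^sup>2) + ln (1 + b\<^sup>2)"
proof -
  have pos: "0 < 1 + y\<^sup>2" for y :: real
    by (simp add: add_pos_nonneg)
  have "ln (1 + (a + b)\<^sup>2) \<le> ln (2 * (1 + a\<^sup>2) * (1 + b\<^sup>2))"
    using one_plus_square_add_le pos by (intro ln_mono) auto
  also have "\<dots> = ln 2 + ln (1 + a\<^sup>2) + ln (1 + b\<^sup>2)"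
    using pos by (simp only: ln_mult_pos mult_pos_pos zero_less_numeral)
  finally show ?thesis .
qed

lemma ln_one_plus_square_squared_le:
  fixes x e :: real
  assumes "0 < e"
  shows "(ln (1 + x\<^sup>2))\<^sup>2 \<le> 4 / e\<^sup>2 * (1 + x\<^sup>2) powr e"
proof -
  have "ln (1 + x\<^sup>2) \<le> (1 + x\<^sup>2) powr (e / 2) / (e / 2)"
    using assms by (intro ln_powr_bound) auto
  then have "(ln (1 + x\<^sup>2))\<^sup>2 \<le> ((1 + x\<^sup>2) powr (e / 2) / (e / 2))\<^sup>2"
    by (intro power_mono) auto
  also have "\<dots> = 4 / e\<^sup>2 * (1 + x\<^sup>2) powr e"
    by (simp add: power2_eq_square field_simps flip: powr_add)
  finally show ?thesis .
qed

lemma exp_minus_le_quadratic: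
  fixes u :: real
  assumes "0 \<le> u"
  shows "exp (- u) \<le> 1 - u + u\<^sup>2 / 2"
proof -
  define h where "h v = 1 - v + v\<^sup>2 / 2 - exp (- v)" for v :: real
  have "h 0 \<le> h u"
  proof (rule DERIV_nonneg_imp_nondecreasing[OF assms])
    fix v :: real
    have "(h has_real_derivative (v - 1 + exp (- v))) (at v)"
      unfolding h_def by (auto intro!: derivative_eq_intros simp: power2_eq_square)
    moreover have "0 \<le> v - 1 + exp (- v)"
      using exp_ge_add_one_self[of "- v"] by simp
    ultimately show "\<exists>y. (h has_real_derivative y) (at v) \<and> 0 \<le> y" by blast
  qed
  then show ?thesis by (simp add: h_def)
qed

lemma powr_le_one_plus_mult:
  fixes y p :: real
  assumes "0 < y" "0 \<le> p" "p \<le> 1"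
  shows "y powr p \<le> 1 + p * (y - 1)"
  using Youngs_inequality_0[of p "1 - p" y 1] assms by (simp add: algebra_simps)

lemma one_plus_square_powr_neg_le:
  fixes x q :: real
  assumes "1 \<le> \<bar>x\<bar>" "0 \<le> q"
  shows "(1 + x\<^sup>2) powr (- q) \<le> \<bar>x\<bar> powr (- 2 * q)"
proof -
  have "(1 + x\<^sup>2) powr (- q) \<le> (x\<^sup>2) powr (- q)"
    using assms by (intro powr_mono2') (auto simp: abs_square_le_1)
  also have "(x\<^sup>2) powr (- q) = (\<bar>x\<bar> powr 2) powr (- q)"
    by (simp only: powr_numeral[OF abs_ge_zero] power2_abs)
  also have "\<dots> = \<bar>x\<bar> powr (- 2 * q)"
    unfolding powr_powr by simp
  finally show ?thesis .
qed

lemma integrable_one_plus_square_powr: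
  fixes q :: real
  assumes "1/2 < q"
  shows "integrable lborel (\<lambda>x::real. (1 + x\<^sup>2) powr (- q))"
proof -
  define tail where "tail x = indicator {1..} x * x powr (- 2 * q)" for x :: real
  have [measurable]: "tail \<in> borel_measurable borel"
    unfolding tail_def by measurable
  have "((\<lambda>x::real. x powr (- 2 * q)) has_integral - (1 powr (- 2 * q + 1)) / (- 2 * q + 1)) {1..}"
    using assms by (intro has_integral_powr_to_inf) auto
  then have "(\<integral>\<^sup>+x. ennreal (x powr (- 2 * q)) * indicator {1..} x \<partial>lborel) < \<infinity>"
    by (subst nn_integral_has_integral_lebesgue') auto
  also have "(\<integral>\<^sup>+x. ennreal (x powr (- 2 * q)) * indicator {1..} x \<partial>lborel) = (\<integral>\<^sup>+x. ennreal (tail x) \<partial>lborel)"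
    by (intro nn_integral_cong) (auto simp: tail_def indicator_def)
  finally have tail: "integrable lborel tail"
    by (intro integrableI_nonneg) (auto simp: tail_def)
  then have "integrable lborel (\<lambda>x. tail (- x))"
    using integrable_distr_eq[of uminus lborel borel tail] lborel_distr_uminus by simp
  with tail have "integrable lborel (\<lambda>x. indicator {-1..1} x + tail x + tail (- x))"
    by (intro Bochner_Integration.integrable_add integrable_real_indicator) auto
  then show ?thesis
  proof (rule Bochner_Integration.integrable_bound)
    show "AE x in lborel. norm ((1 + x\<^sup>2) powr (- q)) \<le> norm (indicator {-1..1} x + tail x + tail (- x))"
    proof (intro AE_I2)
      fix x :: real
      have "(1 + x\<^sup>2) powr (- q) \<le> indicator {-1..1} x + tail x + tail (- x)"
      proof (cases "\<bar>x\<bar> \<le> 1")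
        case True
        then show ?thesis
          using powr_mono2'[of "- q" 1 "1 + x\<^sup>2"] assms by (auto simp: tail_def indicator_def)
      next
        case False
        then show ?thesis
          using one_plus_square_powr_neg_le[of x q] assms by (auto simp: tail_def indicator_def)
      qed
      moreover have "0 \<le> tail x" "0 \<le> tail (- x)"
        by (auto simp: tail_def)
      ultimately show "norm ((1 + x\<^sup>2) powr (- q)) \<le> norm (indicator {-1..1} x + tail x + tail (- x))"
        by simp
    qed
  qed simp
qed

lemma integral_one_plus_square_powr_pos:
  fixes q :: real
  assumes "1/2 < q"
  shows "0 < (LINT x|lborel. (1 + x\<^sup>2) powr (- q))"
proof -
  have int: "integrable lborel (\<lambda>x::real. (1 + x\<^sup>2) powr (- q))"
    using integrable_one_plus_square_powr[OF assms] .
  have "\<not> (AE x in lborel. (1 + x\<^sup>2) powr (- q) = (0::real))"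
    using ae_filter_eq_bot_iff[of "lborel :: real measure"] by (simp add: add_nonneg_eq_0_iff)
  then have "(LINT x|lborel. (1 + x\<^sup>2) powr (- q)) \<noteq> 0"
    using integral_nonneg_eq_0_iff_AE[OF int] by simp
  moreover have "0 \<le> (LINT x|lborel. (1 + x\<^sup>2) powr (- q))"
    by (intro Bochner_Integration.integral_nonneg) simp
  ultimately show ?thesis by linarith
qed

lemma cm_pos: "1/2 < m \<Longrightarrow> 0 < cm m"
  unfolding cm_def using integral_one_plus_square_powr_pos by simp

lemma prob_space_num:
  assumes "1/2 < m"
  shows "prob_space (num m)"
proof
  have "emeasure (num m) (space (num m)) = (\<integral>\<^sup>+x. ennreal (cm m * (1 + x\<^sup>2) powr (- m)) \<partial>lborel)"
    by (simp add: num_def emeasure_density)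
  also have "\<dots> = ennreal (LINT x|lborel. cm m * (1 + x\<^sup>2) powr (- m))"
    using integrable_one_plus_square_powr[OF assms] cm_pos[OF assms]
    by (intro nn_integral_eq_integral) auto
  also have "\<dots> = 1"
    using integral_one_plus_square_powr_pos[OF assms] by (simp add: cm_def)
  finally show "emeasure (num m) (space (num m)) = 1" .
qed

lemma integrable_num_powr:
  assumes "1/2 < m" "e < m - 1/2"
  shows "integrable (num m) (\<lambda>x. (1 + x\<^sup>2) powr e)"
proof -
  have "integrable lborel (\<lambda>x::real. cm m * (1 + x\<^sup>2) powr (- (m - e)))"
    using integrable_one_plus_square_powr[of "m - e"] assms(2) by simp
  also have "(\<lambda>x::real. cm m * (1 + x\<^sup>2) powr (- (m - e))) = (\<lambda>x. (cm m * (1 + x\<^sup>2) powr (- m)) *\<^sub>R (1 + x\<^sup>2) powr e)"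
    by (simp add: powr_diff powr_minus divide_inverse mult_ac)
  finally show ?thesis
    unfolding num_def using cm_pos[OF assms(1)] by (subst integrable_density) auto
qed

lemma integrable_num_bounded:
  assumes "1/2 < m" "e < m - 1/2"
    and [measurable]: "f \<in> borel_measurable borel" and "\<And>x. \<bar>f x\<bar> \<le> a + b * (1 + x\<^sup>2) powr e"
  shows "integrable (num m) f"
proof -
  interpret prob_space "num m" using prob_space_num[OF assms(1)] .
  have "integrable (num m) (\<lambda>x. a + b * (1 + x\<^sup>2) powr e)"
    using integrable_num_powr[OF assms(1,2)] by simp
  then show ?thesis
  proof (rule Bochner_Integration.integrable_bound)
    show "f \<in> borel_measurable (num m)"
      by (simp add: num_def)
    show "AE x in num m. norm (f x) \<le> norm (a + b * (1 + x\<^sup>2) powr e)"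
      using assms(4) by (intro AE_I2) (auto intro: order_trans[OF _ abs_ge_self])
  qed
qed

lemma ln_shift_squared_le:
  fixes x t e :: real
  assumes "0 < e"
  shows "(ln (1 + (x - t)\<^sup>2))\<^sup>2 \<le> 2 * (ln 2 + ln (1 + t\<^sup>2))\<^sup>2 + 8 / e\<^sup>2 * (1 + x\<^sup>2) powr e"
proof -
  have "ln (1 + (x - t)\<^sup>2) \<le> (ln 2 + ln (1 + t\<^sup>2)) + ln (1 + x\<^sup>2)"
    using ln_one_plus_square_add_le[of x "- t"] by simp
  then have "(ln (1 + (x - t)\<^sup>2))\<^sup>2 \<le> ((ln 2 + ln (1 + t\<^sup>2)) + ln (1 + x\<^sup>2))\<^sup>2"
    by (intro power_mono) auto
  also have "\<dots> \<le> 2 * (ln 2 + ln (1 + t\<^sup>2))\<^sup>2 + 2 * (ln (1 + x\<^sup>2))\<^sup>2"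
    using zero_le_power2[of "ln 2 + ln (1 + t\<^sup>2) - ln (1 + x\<^sup>2)"]
    by (simp add: power2_eq_square algebra_simps)
  also have "\<dots> \<le> 2 * (ln 2 + ln (1 + t\<^sup>2))\<^sup>2 + 8 / e\<^sup>2 * (1 + x\<^sup>2) powr e"
    using ln_one_plus_square_squared_le[OF assms, of x] by simp
  finally show ?thesis .
qed

lemma integrable_num_ln_shift:
  assumes "1/2 < m"
  shows "integrable (num m) (\<lambda>x. ln (1 + (x - t)\<^sup>2))"
proof (rule integrable_num_bounded[OF assms])
  define e where "e = (m - 1/2) / 2"
  have e: "0 < e" "e < m - 1/2"
    using assms by (auto simp: e_def)
  show "e < m - 1/2"
    by (fact e(2))
  fix x :: real
  have "ln (1 + (x - t)\<^sup>2) \<le> (ln 2 + ln (1 + t\<^sup>2)) + ln (1 + x\<^sup>2)"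
    using ln_one_plus_square_add_le[of x "- t"] by simp
  also have "\<dots> \<le> (ln 2 + ln (1 + t\<^sup>2)) + 1 / e * (1 + x\<^sup>2) powr e"
    using ln_powr_bound[of "1 + x\<^sup>2" e] e(1) by simp
  finally show "\<bar>ln (1 + (x - t)\<^sup>2)\<bar> \<le> (ln 2 + ln (1 + t\<^sup>2)) + 1 / e * (1 + x\<^sup>2) powr e"
    by simp
qed measurable

lemma integrable_num_ln_shift_squared:
  assumes "1/2 < m"
  shows "integrable (num m) (\<lambda>x. (ln (1 + (x - t)\<^sup>2))\<^sup>2)"
proof (rule integrable_num_bounded[OF assms])
  define e where "e = (m - 1/2) / 2"
  show "e < m - 1/2"
    using assms by (simp add: e_def)
  show "\<bar>(ln (1 + (x - t)\<^sup>2))\<^sup>2\<bar> \<le> 2 * (ln 2 + ln (1 + t\<^sup>2))\<^sup>2 + 8 / e\<^sup>2 * (1 + x\<^sup>2) powr e" for x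
    using ln_shift_squared_le[of e x t] assms by (simp add: e_def)
qed measurable

lemma Fm_nonneg: "0 \<le> Fm m t"
  unfolding Fm_def by (intro Bochner_Integration.integral_nonneg) simp

lemma Fm_le_ln:
  assumes "1/2 < m"
  shows "Fm m t \<le> ln 2 + Fm m 0 + ln (1 + t\<^sup>2)"
proof -
  interpret prob_space "num m" using prob_space_num[OF assms] .
  have "Fm m t \<le> (LINT x|num m. ln 2 + ln (1 + t\<^sup>2) + ln (1 + x\<^sup>2))"
    unfolding Fm_def using integrable_num_ln_shift[OF assms, of 0] integrable_num_ln_shift[OF assms, of t]
      ln_one_plus_square_add_le[of _ "- t"]
    by (intro Bochner_Integration.integral_mono) (auto simp: add_ac)
  also have "\<dots> = ln 2 + ln (1 + t\<^sup>2) + Fm m 0"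
    unfolding Fm_def using integrable_num_ln_shift[OF assms, of 0] by (simp add: prob_space)
  finally show ?thesis by simp
qed

lemma ln_le_Fm:
  assumes "1/2 < m"
  shows "ln (1 + t\<^sup>2) \<le> ln 2 + Fm m 0 + Fm m t"
proof -
  interpret prob_space "num m" using prob_space_num[OF assms] .
  have pointwise: "ln (1 + t\<^sup>2) \<le> ln 2 + ln (1 + x\<^sup>2) + ln (1 + (x - t)\<^sup>2)" for x
    using ln_one_plus_square_add_le[of x "t - x"] by (simp add: power2_commute)
  have "ln (1 + t\<^sup>2) = (LINT x|num m. ln (1 + t\<^sup>2))"
    by (simp add: prob_space)
  also have "\<dots> \<le> (LINT x|num m. ln 2 + ln (1 + x\<^sup>2) + ln (1 + (x - t)\<^sup>2))"
    using integrable_num_ln_shift[OF assms, of 0] integrable_num_ln_shift[OF assms, of t]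
    by (intro Bochner_Integration.integral_mono pointwise) auto
  also have "\<dots> = ln 2 + Fm m 0 + Fm m t"
    unfolding Fm_def using integrable_num_ln_shift[OF assms, of 0] integrable_num_ln_shift[OF assms, of t]
    by (simp add: prob_space)
  finally show ?thesis .
qed

lemma (in prob_space) Chernoff_lower_tail_iid:
  fixes X :: "'i \<Rightarrow> 'a \<Rightarrow> real" and g :: "real \<Rightarrow> real" and \<mu> :: "real measure"
  assumes "finite I" and indep: "indep_vars (\<lambda>_. borel) X I"
    and distr_X: "\<And>i. i \<in> I \<Longrightarrow> distr M borel (X i) = \<mu>"
    and [measurable]: "g \<in> borel_measurable borel" and g_nonneg: "\<And>x. 0 \<le> g x" and "0 \<le> l"
  shows "prob {\<omega> \<in> space M. (\<Sum>i\<in>I. g (X i \<omega>)) \<le> a}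
           \<le> exp (l * a) * (\<integral>x. exp (- l * g x) \<partial>\<mu>) ^ card I"
proof -
  define W where "W \<omega> = (\<Prod>i\<in>I. exp (- l * g (X i \<omega>)))" for \<omega>
  have X_measurable [measurable]: "X i \<in> borel_measurable M" if "i \<in> I" for i
    using indep that by (simp add: indep_vars_def2)
  have indep_exp: "indep_vars (\<lambda>_. borel) (\<lambda>i \<omega>. exp (- l * g (X i \<omega>))) I"
    by (rule indep_vars_compose2[OF indep]) measurable
  have exp_le_1: "exp (- l * g x) \<le> 1" for x
    using g_nonneg[of x] \<open>0 \<le> l\<close> by simp
  have int: "integrable M (\<lambda>\<omega>. exp (- l * g (X i \<omega>)))" if "i \<in> I" for i
    using that exp_le_1 by (intro integrable_const_bound[of _ 1]) auto
  have "expectation W = (\<Prod>i\<in>I. expectation (\<lambda>\<omega>. exp (- l * g (X i \<omega>))))"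
    unfolding W_def by (rule indep_vars_lebesgue_integral[OF \<open>finite I\<close> indep_exp int])
  also have "\<dots> = (\<Prod>i\<in>I. \<integral>x. exp (- l * g x) \<partial>\<mu>)"
    by (intro prod.cong refl) (simp add: integral_distr flip: distr_X)
  finally have EW: "expectation W = (\<integral>x. exp (- l * g x) \<partial>\<mu>) ^ card I"
    by simp
  have "{\<omega> \<in> space M. (\<Sum>i\<in>I. g (X i \<omega>)) \<le> a} \<subseteq> {\<omega> \<in> space M. exp (- l * a) \<le> W \<omega>}"
  proof safe
    fix \<omega> assume "(\<Sum>i\<in>I. g (X i \<omega>)) \<le> a"
    then have "- l * a \<le> - l * (\<Sum>i\<in>I. g (X i \<omega>))"
      using \<open>0 \<le> l\<close> by (simp add: mult_left_mono)
    also have "exp (- l * (\<Sum>i\<in>I. g (X i \<omega>))) = W \<omega>"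
      unfolding W_def using \<open>finite I\<close> by (simp add: sum_distrib_left exp_sum)
    finally show "exp (- l * a) \<le> W \<omega>"
      by simp
  qed
  then have "prob {\<omega> \<in> space M. (\<Sum>i\<in>I. g (X i \<omega>)) \<le> a} \<le> prob {\<omega> \<in> space M. exp (- l * a) \<le> W \<omega>}"
    unfolding W_def by (intro finite_measure_mono) measurable
  also have "\<dots> \<le> expectation W / exp (- l * a)"
    unfolding W_def using \<open>finite I\<close>
    by (intro integral_Markov_inequality_measure[where A = "space M"] indep_vars_integrable[OF _ indep_exp int])
       (auto intro!: AE_I2 prod_nonneg)
  finally show ?thesis
    by (simp add: EW exp_minus divide_inverse mult.commute)
qed

lemma (in prob_space) expectation_exp_neg_le:
  fixes Y :: "'a \<Rightarrow> real"
  assumes "integrable M Y" "integrable M (\<lambda>x. (Y x)\<^sup>2)" "\<And>x. 0 \<le> Y x" "0 \<le> l"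
  shows "expectation (\<lambda>x. exp (- l * Y x)) \<le> exp (- l * expectation Y + l\<^sup>2 / 2 * expectation (\<lambda>x. (Y x)\<^sup>2))"
proof -
  have [measurable]: "Y \<in> borel_measurable M"
    using assms(1) by simp
  have "expectation (\<lambda>x. exp (- l * Y x)) \<le> expectation (\<lambda>x. 1 - l * Y x + l\<^sup>2 / 2 * (Y x)\<^sup>2)"
  proof (intro integral_mono)
    show "integrable M (\<lambda>x. exp (- l * Y x))"
      using assms(3,4) by (intro integrable_const_bound[of _ 1]) auto
    show "integrable M (\<lambda>x. 1 - l * Y x + l\<^sup>2 / 2 * (Y x)\<^sup>2)"
      using assms(1,2) by auto
    fix x
    show "exp (- l * Y x) \<le> 1 - l * Y x + l\<^sup>2 / 2 * (Y x)\<^sup>2"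
      using exp_minus_le_quadratic[of "l * Y x"] assms(3,4) by (simp add: power_mult_distrib)
  qed
  also have "\<dots> = 1 + (- l * expectation Y + l\<^sup>2 / 2 * expectation (\<lambda>x. (Y x)\<^sup>2))"
    using assms(1,2) by (simp add: prob_space)
  also have "\<dots> \<le> exp (- l * expectation Y + l\<^sup>2 / 2 * expectation (\<lambda>x. (Y x)\<^sup>2))"
    by (rule exp_ge_add_one_self)
  finally show ?thesis .
qed

lemma num_exp_neg_ln_shift_le_far:
  assumes "1/2 < m" "0 < l" "l \<le> e" "e < m - 1/2"
  shows "(LINT x|num m. exp (- l * ln (1 + (x - t)\<^sup>2)))
           \<le> exp (l * (ln 2 - ln (1 + t\<^sup>2) + ((LINT x|num m. (1 + x\<^sup>2) powr e) - 1) / e))"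
proof -
  interpret prob_space "num m" using prob_space_num[OF assms(1)] .
  define E1 where "E1 = exp (l * (ln 2 - ln (1 + t\<^sup>2)))"
  define EZ where "EZ = (LINT x|num m. (1 + x\<^sup>2) powr e)"
  have pos: "0 < 1 + y\<^sup>2" for y :: real
    by (simp add: add_pos_nonneg)
  have pointwise: "exp (- l * ln (1 + (x - t)\<^sup>2)) \<le> E1 * (1 + l / e * ((1 + x\<^sup>2) powr e - 1))" for x
  proof -
    have "- l * ln (1 + (x - t)\<^sup>2) \<le> l * (ln 2 - ln (1 + t\<^sup>2)) + l * ln (1 + x\<^sup>2)"
      using mult_left_mono[OF ln_one_plus_square_add_le[of x "t - x"], of l] assms(2)
      by (simp add: power2_commute algebra_simps)
    then have "exp (- l * ln (1 + (x - t)\<^sup>2)) \<le> exp (l * (ln 2 - ln (1 + t\<^sup>2)) + l * ln (1 + x\<^sup>2))"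
      by simp
    also have "\<dots> = E1 * (1 + x\<^sup>2) powr l"
      unfolding E1_def using pos[of x] by (simp add: powr_def exp_add mult.commute)
    also have "(1 + x\<^sup>2) powr l = ((1 + x\<^sup>2) powr e) powr (l / e)"
      using assms by (simp add: powr_powr)
    also have "\<dots> \<le> 1 + l / e * ((1 + x\<^sup>2) powr e - 1)"
      using assms pos[of x] by (intro powr_le_one_plus_mult) auto
    finally show ?thesis
      unfolding E1_def by simp
  qed
  have "(LINT x|num m. exp (- l * ln (1 + (x - t)\<^sup>2))) \<le> (LINT x|num m. E1 * (1 + l / e * ((1 + x\<^sup>2) powr e - 1)))"
  proof (intro integral_mono pointwise)
    show "integrable (num m) (\<lambda>x. exp (- l * ln (1 + (x - t)\<^sup>2)))"
      using assms(2) by (intro integrable_const_bound[of _ 1]) (auto simp: num_def)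
    show "integrable (num m) (\<lambda>x. E1 * (1 + l / e * ((1 + x\<^sup>2) powr e - 1)))"
      using integrable_num_powr[OF assms(1,4)] by auto
  qed
  also have "\<dots> = E1 * (1 + l * ((EZ - 1) / e))"
    unfolding EZ_def using integrable_num_powr[OF assms(1,4)] by (simp add: prob_space algebra_simps diff_divide_distrib)
  also have "\<dots> \<le> E1 * exp (l * ((EZ - 1) / e))"
    unfolding E1_def by (intro mult_left_mono exp_ge_add_one_self) auto
  finally show ?thesis
    unfolding E1_def EZ_def by (simp add: algebra_simps flip: exp_add)
qed

lemma num_exp_neg_ln_shift_le_near:
  assumes "1/2 < m" "0 \<le> l" "0 < e" "e < m - 1/2"
  shows "(LINT x|num m. exp (- l * ln (1 + (x - t)\<^sup>2)))
           \<le> exp (- l * Fm m t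
                  + l\<^sup>2 / 2 * (2 * (ln 2 + ln (1 + t\<^sup>2))\<^sup>2 + 8 / e\<^sup>2 * (LINT x|num m. (1 + x\<^sup>2) powr e)))"
proof -
  interpret prob_space "num m" using prob_space_num[OF assms(1)] .
  have "(LINT x|num m. (ln (1 + (x - t)\<^sup>2))\<^sup>2)
          \<le> (LINT x|num m. 2 * (ln 2 + ln (1 + t\<^sup>2))\<^sup>2 + 8 / e\<^sup>2 * (1 + x\<^sup>2) powr e)"
    using integrable_num_ln_shift_squared[OF assms(1)] integrable_num_powr[OF assms(1,4)]
    by (intro integral_mono ln_shift_squared_le assms(3)) auto
  also have "\<dots> = 2 * (ln 2 + ln (1 + t\<^sup>2))\<^sup>2 + 8 / e\<^sup>2 * (LINT x|num m. (1 + x\<^sup>2) powr e)"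
    using integrable_num_powr[OF assms(1,4)] by (simp add: prob_space)
  finally have second_moment: "(LINT x|num m. (ln (1 + (x - t)\<^sup>2))\<^sup>2) \<le> \<dots>" .
  have "(LINT x|num m. exp (- l * ln (1 + (x - t)\<^sup>2)))
          \<le> exp (- l * Fm m t + l\<^sup>2 / 2 * (LINT x|num m. (ln (1 + (x - t)\<^sup>2))\<^sup>2))"
    unfolding Fm_def using assms(2) integrable_num_ln_shift[OF assms(1)] integrable_num_ln_shift_squared[OF assms(1)]
    by (intro expectation_exp_neg_le) auto
  also have "\<dots> \<le> exp (- l * Fm m t
                  + l\<^sup>2 / 2 * (2 * (ln 2 + ln (1 + t\<^sup>2))\<^sup>2 + 8 / e\<^sup>2 * (LINT x|num m. (1 + x\<^sup>2) powr e)))"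
    using second_moment by (intro exp_le_cancel_iff[THEN iffD2] add_left_mono mult_left_mono) auto
  finally show ?thesis .
qed

lemma Chernoff_exponent_far:
  assumes "1/2 < m"
  obtains D0 :: real where "0 \<le> D0"
    "\<And>t \<delta> l. 0 < l \<Longrightarrow> l \<le> \<delta> \<Longrightarrow> \<delta> < (m - 1/2) / 2 \<Longrightarrow> D0 \<le> Fm m t - Fm m 0 - 2 * \<delta> \<Longrightarrow>
       exp (l * (Fm m 0 + \<delta>)) * (LINT x|num m. exp (- l * ln (1 + (x - t)\<^sup>2)))
         \<le> exp (- l * (Fm m t - Fm m 0 - 2 * \<delta>) / 2)"
proof -
  define e where "e = (m - 1/2) / 2"
  define K where "K = ((LINT x|num m. (1 + x\<^sup>2) powr e) - 1) / e"
  show thesis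
  proof (rule that[of "2 * (Fm m 0 + 2 * ln 2 + \<bar>K\<bar>)"])
    show "0 \<le> 2 * (Fm m 0 + 2 * ln 2 + \<bar>K\<bar>)"
      using Fm_nonneg[of m 0] by simp
    fix t \<delta> l :: real
    assume l: "0 < l" "l \<le> \<delta>" and \<delta>: "\<delta> < (m - 1/2) / 2"
      and far: "2 * (Fm m 0 + 2 * ln 2 + \<bar>K\<bar>) \<le> Fm m t - Fm m 0 - 2 * \<delta>"
    have "(LINT x|num m. exp (- l * ln (1 + (x - t)\<^sup>2))) \<le> exp (l * (ln 2 - ln (1 + t\<^sup>2) + K))"
      unfolding K_def using assms l \<delta> by (intro num_exp_neg_ln_shift_le_far) (auto simp: e_def)
    then have "exp (l * (Fm m 0 + \<delta>)) * (LINT x|num m. exp (- l * ln (1 + (x - t)\<^sup>2)))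
                 \<le> exp (l * (Fm m 0 + \<delta> + (ln 2 - ln (1 + t\<^sup>2) + K)))"
      by (simp add: distrib_left exp_add)
    also have "\<dots> \<le> exp (- l * (Fm m t - Fm m 0 - 2 * \<delta>) / 2)"
    proof -
      have "Fm m 0 + \<delta> + (ln 2 - ln (1 + t\<^sup>2) + K) \<le> - (Fm m t - Fm m 0 - 2 * \<delta>) / 2"
        using Fm_le_ln[OF assms, of t] far l abs_ge_self[of K] by argo
      then have "l * (Fm m 0 + \<delta> + (ln 2 - ln (1 + t\<^sup>2) + K)) \<le> l * (- (Fm m t - Fm m 0 - 2 * \<delta>) / 2)"
        using l(1) by (intro mult_left_mono) auto
      then show ?thesis
        by (simp add: algebra_simps)
    qed
    finally show "exp (l * (Fm m 0 + \<delta>)) * (LINT x|num m. exp (- l * ln (1 + (x - t)\<^sup>2)))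
         \<le> exp (- l * (Fm m t - Fm m 0 - 2 * \<delta>) / 2)" .
  qed
qed

lemma Chernoff_exponent_near:
  fixes D0 :: real
  assumes "1/2 < m" "0 \<le> D0"
  obtains B :: real where "0 < B"
    "\<And>t \<delta> l. 0 \<le> l \<Longrightarrow> l * B \<le> 2 * \<delta> \<Longrightarrow> \<delta> < (m - 1/2) / 2 \<Longrightarrow>
       0 \<le> Fm m t - Fm m 0 - 2 * \<delta> \<Longrightarrow> Fm m t - Fm m 0 - 2 * \<delta> \<le> D0 \<Longrightarrow>
       exp (l * (Fm m 0 + \<delta>)) * (LINT x|num m. exp (- l * ln (1 + (x - t)\<^sup>2)))
         \<le> exp (- l * (Fm m t - Fm m 0 - 2 * \<delta>) / 2)"
proof -
  define e where "e = (m - 1/2) / 2"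
  define EZ where "EZ = (LINT x|num m. (1 + x\<^sup>2) powr e)"
  define A where "A = 2 * ln 2 + 2 * Fm m 0 + D0 + 2 * e"
  define B where "B = 2 * A\<^sup>2 + 8 / e\<^sup>2 * EZ"
  have e: "0 < e" "e < m - 1/2"
    using assms by (auto simp: e_def)
  have "0 < A"
    using e assms(2) Fm_nonneg[of m 0] unfolding A_def by (simp add: add_pos_nonneg)
  moreover have "0 \<le> EZ"
    unfolding EZ_def by (simp add: Bochner_Integration.integral_nonneg)
  ultimately have "0 < B"
    unfolding B_def by (simp add: add_pos_nonneg)
  show thesis
  proof (rule that[OF \<open>0 < B\<close>])
    fix t \<delta> l :: real
    assume l: "0 \<le> l" "l * B \<le> 2 * \<delta>" and \<delta>: "\<delta> < (m - 1/2) / 2"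
      and D: "0 \<le> Fm m t - Fm m 0 - 2 * \<delta>" "Fm m t - Fm m 0 - 2 * \<delta> \<le> D0"
    have "ln 2 + ln (1 + t\<^sup>2) \<le> A"
      using ln_le_Fm[OF assms(1), of t] D \<delta> unfolding A_def e_def by argo
    moreover have "0 \<le> ln 2 + ln (1 + t\<^sup>2)"
      by simp
    ultimately have "2 * (ln 2 + ln (1 + t\<^sup>2))\<^sup>2 + 8 / e\<^sup>2 * EZ \<le> B"
      unfolding B_def by (simp add: power_mono)
    then have "(LINT x|num m. exp (- l * ln (1 + (x - t)\<^sup>2))) \<le> exp (- l * Fm m t + l\<^sup>2 / 2 * B)"
      using num_exp_neg_ln_shift_le_near[OF assms(1) l(1) e, of t] unfolding EZ_def
      by (auto intro: order_trans simp: mult_left_mono)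
    then have "exp (l * (Fm m 0 + \<delta>)) * (LINT x|num m. exp (- l * ln (1 + (x - t)\<^sup>2)))
                 \<le> exp (l * (Fm m 0 + \<delta>)) * exp (- l * Fm m t + l\<^sup>2 / 2 * B)"
      by simp
    also have "\<dots> = exp (l * (Fm m 0 + \<delta> - Fm m t + l * B / 2))"
      by (simp add: power2_eq_square algebra_simps flip: exp_add)
    also have "\<dots> \<le> exp (- l * (Fm m t - Fm m 0 - 2 * \<delta>) / 2)"
    proof -
      have "Fm m 0 + \<delta> - Fm m t + l * B / 2 \<le> - (Fm m t - Fm m 0 - 2 * \<delta>) / 2"
        using l(2) D(1) by argo
      then have "l * (Fm m 0 + \<delta> - Fm m t + l * B / 2) \<le> l * (- (Fm m t - Fm m 0 - 2 * \<delta>) / 2)"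
        using l(1) by (intro mult_left_mono) auto
      then show ?thesis
        by (simp add: algebra_simps)
    qed
    finally show "exp (l * (Fm m 0 + \<delta>)) * (LINT x|num m. exp (- l * ln (1 + (x - t)\<^sup>2)))
         \<le> exp (- l * (Fm m t - Fm m 0 - 2 * \<delta>) / 2)" .
  qed
qed

lemma uniform_Chernoff_exponent:
  assumes "1/2 < m"
  obtains s :: real where "0 < s"
    "\<And>t \<delta>. 0 < \<delta> \<Longrightarrow> \<delta> < (m - 1/2) / 2 \<Longrightarrow> 0 < Fm m t - Fm m 0 - 2 * \<delta> \<Longrightarrow>
       exp (s * \<delta> * (Fm m 0 + \<delta>)) * (LINT x|num m. exp (- (s * \<delta>) * ln (1 + (x - t)\<^sup>2)))
         \<le> exp (- (s * \<delta>) * (Fm m t - Fm m 0 - 2 * \<delta>) / 2)"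
proof -
  obtain D0 where "0 \<le> D0" and far: "\<And>t \<delta> l. 0 < l \<Longrightarrow> l \<le> \<delta> \<Longrightarrow> \<delta> < (m - 1/2) / 2 \<Longrightarrow>
       D0 \<le> Fm m t - Fm m 0 - 2 * \<delta> \<Longrightarrow>
       exp (l * (Fm m 0 + \<delta>)) * (LINT x|num m. exp (- l * ln (1 + (x - t)\<^sup>2)))
         \<le> exp (- l * (Fm m t - Fm m 0 - 2 * \<delta>) / 2)"
    using Chernoff_exponent_far[OF assms] by blast
  obtain B where "0 < B" and near: "\<And>t \<delta> l. 0 \<le> l \<Longrightarrow> l * B \<le> 2 * \<delta> \<Longrightarrow> \<delta> < (m - 1/2) / 2 \<Longrightarrow>
       0 \<le> Fm m t - Fm m 0 - 2 * \<delta> \<Longrightarrow> Fm m t - Fm m 0 - 2 * \<delta> \<le> D0 \<Longrightarrow>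
       exp (l * (Fm m 0 + \<delta>)) * (LINT x|num m. exp (- l * ln (1 + (x - t)\<^sup>2)))
         \<le> exp (- l * (Fm m t - Fm m 0 - 2 * \<delta>) / 2)"
    using Chernoff_exponent_near[OF assms \<open>0 \<le> D0\<close>] by blast
  show thesis
  proof (rule that[of "min 1 (2 / B)"])
    show "0 < min 1 (2 / B)"
      using \<open>0 < B\<close> by simp
    fix t \<delta> :: real
    assume "0 < \<delta>" "\<delta> < (m - 1/2) / 2" "0 < Fm m t - Fm m 0 - 2 * \<delta>"
    moreover have "min 1 (2 / B) * \<delta> \<le> \<delta>" "min 1 (2 / B) * \<delta> * B \<le> 2 * \<delta>"
      using \<open>0 < \<delta>\<close> \<open>0 < B\<close> by (auto simp: min_def field_simps)
    ultimately show "exp (min 1 (2 / B) * \<delta> * (Fm m 0 + \<delta>))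
        * (LINT x|num m. exp (- (min 1 (2 / B) * \<delta>) * ln (1 + (x - t)\<^sup>2)))
         \<le> exp (- (min 1 (2 / B) * \<delta>) * (Fm m t - Fm m 0 - 2 * \<delta>) / 2)"
      using far near \<open>0 < B\<close> by (cases "D0 \<le> Fm m t - Fm m 0 - 2 * \<delta>") auto
  qed
qed

lemma (in prob_space) prob_Ln_le_Chernoff:
  fixes X :: "nat \<Rightarrow> 'a \<Rightarrow> real"
  assumes indep: "indep_vars (\<lambda>_. borel) X {1..}" and distr_X: "\<And>i. 1 \<le> i \<Longrightarrow> distr M borel (X i) = \<mu>"
    and "0 \<le> l" "1 \<le> n"
  shows "prob {\<omega> \<in> space M. Ln X n t \<omega> \<le> a} \<le> (exp (l * a) * (\<integral>x. exp (- l * ln (1 + (x - t)\<^sup>2)) \<partial>\<mu>)) ^ n"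
proof -
  have "{\<omega> \<in> space M. Ln X n t \<omega> \<le> a} = {\<omega> \<in> space M. (\<Sum>i\<in>{1..n}. ln (1 + (X i \<omega> - t)\<^sup>2)) \<le> real n * a}"
    using \<open>1 \<le> n\<close> by (auto simp: Ln_def field_simps)
  also have "prob \<dots> \<le> exp (l * (real n * a)) * (\<integral>x. exp (- l * ln (1 + (x - t)\<^sup>2)) \<partial>\<mu>) ^ card {1..n}"
    using distr_X \<open>0 \<le> l\<close> by (intro Chernoff_lower_tail_iid indep_vars_subset[OF indep]) auto
  also have "\<dots> = (exp (l * a) * (\<integral>x. exp (- l * ln (1 + (x - t)\<^sup>2)) \<partial>\<mu>)) ^ n"
    by (simp add: power_mult_distrib mult.assoc flip: exp_of_nat_mult)
  finally show ?thesis .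
qed

theorem lemma5p2:
  fixes m :: real
  assumes "m > 1/2"
  shows "\<exists>c>0. \<forall>(M :: 'a measure) (X :: nat \<Rightarrow> 'a \<Rightarrow> real) (r::real) (\<delta>::real) (t::real) (n::nat).
           prob_space M
           \<and> (\<forall>i\<ge>1. X i \<in> borel_measurable M)
           \<and> prob_space.indep_vars M (\<lambda>_. borel) X {1..}
           \<and> (\<forall>i\<ge>1. distr M borel (X i) = num m)
           \<and> r > 0
           \<and> 0 < \<delta> \<and> \<delta> < min ((1/2) * (m - 1/2)) ((Fm m r - Fm m 0) / 4)
           \<and> \<bar>t\<bar> > r \<and> n \<ge> 1
         \<longrightarrow> measure M {\<omega> \<in> space M. Ln X n t \<omega> \<le> Fm m 0 + \<delta>}
               \<le> exp (- (\<delta> / c) * (Fm m t - Fm m 0 - 2 * \<delta>) * real n)"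
proof -
  obtain s where "0 < s" and exponent: "\<And>t \<delta>. 0 < \<delta> \<Longrightarrow> \<delta> < (m - 1/2) / 2 \<Longrightarrow> 0 < Fm m t - Fm m 0 - 2 * \<delta> \<Longrightarrow>
       exp (s * \<delta> * (Fm m 0 + \<delta>)) * (LINT x|num m. exp (- (s * \<delta>) * ln (1 + (x - t)\<^sup>2)))
         \<le> exp (- (s * \<delta>) * (Fm m t - Fm m 0 - 2 * \<delta>) / 2)"
    using uniform_Chernoff_exponent[OF assms] by blast
  show ?thesis
  proof (intro exI[of _ "2 / s"] conjI allI impI)
    show "0 < 2 / s"
      using \<open>0 < s\<close> by simp
    fix M :: "'a measure" and X :: "nat \<Rightarrow> 'a \<Rightarrow> real" and r \<delta> t :: real and n :: nat
    assume "prob_space M \<and> (\<forall>i\<ge>1. X i \<in> borel_measurable M) \<and> prob_space.indep_vars M (\<lambda>_. borel) X {1..}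
      \<and> (\<forall>i\<ge>1. distr M borel (X i) = num m) \<and> r > 0
      \<and> 0 < \<delta> \<and> \<delta> < min ((1/2) * (m - 1/2)) ((Fm m r - Fm m 0) / 4) \<and> \<bar>t\<bar> > r \<and> n \<ge> 1"
    \<comment> \<open>The hypotheses on r only ensure F_m(t) - F_m(0) - 2 delta > 0; without it the bound is trivial.\<close>
    then have "prob_space M" and indep: "prob_space.indep_vars M (\<lambda>_. borel) X {1..}"
      and distr_X: "\<forall>i\<ge>1. distr M borel (X i) = num m" and \<delta>: "0 < \<delta>" "\<delta> < (m - 1/2) / 2" and "1 \<le> n"
      by auto
    interpret prob_space M by fact
    define D where "D = Fm m t - Fm m 0 - 2 * \<delta>"
    have "prob {\<omega> \<in> space M. Ln X n t \<omega> \<le> Fm m 0 + \<delta>} \<le> exp (- (s * \<delta> * D / 2)) ^ n"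
    proof (cases "0 < D")
      case True
      have "prob {\<omega> \<in> space M. Ln X n t \<omega> \<le> Fm m 0 + \<delta>}
              \<le> (exp (s * \<delta> * (Fm m 0 + \<delta>)) * (LINT x|num m. exp (- (s * \<delta>) * ln (1 + (x - t)\<^sup>2)))) ^ n"
        using \<open>0 < s\<close> \<delta> distr_X \<open>1 \<le> n\<close> by (intro prob_Ln_le_Chernoff indep) auto
      also have "\<dots> \<le> exp (- (s * \<delta> * D / 2)) ^ n"
        using exponent[OF \<delta> True[unfolded D_def]] unfolding D_def
        by (intro power_mono) (auto simp: Bochner_Integration.integral_nonneg)
      finally show ?thesis .
    next
      case False
      then have "1 \<le> exp (- (s * \<delta> * D / 2)) ^ n"
        using \<open>0 < s\<close> \<delta> by (simp add: mult_nonpos_nonneg mult_le_0_iff)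
      with prob_le_1 show ?thesis
        by (rule order_trans)
    qed
    then show "measure M {\<omega> \<in> space M. Ln X n t \<omega> \<le> Fm m 0 + \<delta>}
               \<le> exp (- (\<delta> / (2 / s)) * (Fm m t - Fm m 0 - 2 * \<delta>) * real n)"
      by (simp add: D_def mult_ac flip: exp_of_nat_mult)
  qed
qed

end
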